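(* Let $n\ge 1$ and $d\ge 0$. For every polynomial $p\in\mathbb{R}[x]_d$, $x\in\mathbb{R}^n$, $$\|p\|_{\mathbb{R}[x]}\le 3^{d+1}\,\|p\|_{C([-1,1]^n)}.$$
   Context: $\mathbb{R}[x]_d$ is the space of real polynomials in $x\in\mathbb{R}^n$ of total degree at most $d$. For $p(x)=\sum_{|\alpha|\le d}\beta_\alpha x^\alpha$ (multi-indices $\alpha\in\mathbb{N}^n$, $|\alpha|=\sum_i\alpha_i$), $\|p\|_{\mathbb{R}[x]}:=\max_\alpha |\beta_\alpha|/\binom{|\alpha|}{\alpha}$ with $\binom{|\alpha|}{\alpha}=\frac{|\alpha|!}{\alpha_1!\cdots\alpha_n!}$. $\|p\|_{C(S)}=\max_{x\in S}|p(x)|$. *)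

theory Defs
  imports "HOL-Analysis.Analysis"
begin

text \<open>Multivariate polynomials in x in R^n are represented explicitly by their
coefficient family beta indexed by multi-indices alpha :: 'n => nat
(the dimension n = CARD('n) >= 1).\<close>

definition multi_indices :: "nat \<Rightarrow> ('n::finite \<Rightarrow> nat) set" where
  "multi_indices d = {\<alpha>. (\<Sum>i\<in>UNIV. \<alpha> i) \<le> d}"

definition mi_abs :: "('n::finite \<Rightarrow> nat) \<Rightarrow> nat" where
  "mi_abs \<alpha> = (\<Sum>i\<in>UNIV. \<alpha> i)"

definition multinomial_coeff :: "('n::finite \<Rightarrow> nat) \<Rightarrow> real" where
  "multinomial_coeff \<alpha> = fact (mi_abs \<alpha>) / (\<Prod>i\<in>UNIV. fact (\<alpha> i))"

definition mpoly_eval :: "nat \<Rightarrow> (('n::finite \<Rightarrow> nat) \<Rightarrow> real) \<Rightarrow> real^'n \<Rightarrow> real" where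
  "mpoly_eval d \<beta> x = (\<Sum>\<alpha>\<in>multi_indices d. \<beta> \<alpha> * (\<Prod>i\<in>UNIV. (x $ i) ^ \<alpha> i))"

definition coeff_norm :: "nat \<Rightarrow> (('n::finite \<Rightarrow> nat) \<Rightarrow> real) \<Rightarrow> real" where
  "coeff_norm d \<beta> = Max ((\<lambda>\<alpha>. \<bar>\<beta> \<alpha>\<bar> / multinomial_coeff \<alpha>) ` multi_indices d)"

definition unit_cube :: "(real^'n::finite) set" where
  "unit_cube = {x. \<forall>i. - 1 \<le> x $ i \<and> x $ i \<le> 1}"

definition cube_sup_norm :: "nat \<Rightarrow> (('n::finite \<Rightarrow> nat) \<Rightarrow> real) \<Rightarrow> real" where
  "cube_sup_norm d \<beta> = (SUP x\<in>unit_cube. \<bar>mpoly_eval d \<beta> x\<bar>)"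

end

theory Submission
  imports Defs "HOL-Complex_Analysis.Conformal_Mappings"
begin

text \<open>
  Let \<open>M\<close> be the supremum of \<open>|p|\<close> on the cube. First, \<open>|p(z)| \<le> 3^d M\<close> on the closed
  complex unit polydisc: write \<open>z\<^sub>i = (\<eta>\<^sub>i/3 + 3 conj \<eta>\<^sub>i)/2\<close> with \<open>|\<eta>\<^sub>i| \<le> 1\<close>; then
  \<open>G(w) = w^d p((w \<eta> + conj \<eta> / w)/2)\<close> is a polynomial in \<open>w\<close>, on the unit circle its
  arguments are the real points \<open>Re(w \<eta>\<^sub>i) \<in> [-1,1]\<close>, so by the maximum modulus principle
  \<open>3^-d |p(z)| = |G(1/3)| \<le> M\<close>. Second, averaging \<open>p\<close> against characters over the grid of
  \<open>(d+1)\<close>-st roots of unity isolates each coefficient (a discrete Cauchy formula), so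
  \<open>|\<beta>\<^sub>\<alpha>| \<le> 3^d M\<close>. Finally all multinomial coefficients are at least \<open>1\<close>.
\<close>

lemma fact_mult_fact_le_fact_add: "fact m * fact n \<le> (fact (m + n) :: nat)"
proof -
  have "fact m * fact n * (m + n choose m) = (fact (m + n) :: nat)"
    using binomial_fact_lemma[of m "m + n"] by simp
  moreover have "(m + n choose m) > 0" by simp
  ultimately show ?thesis by (metis dvd_imp_le dvd_triv_left fact_gt_zero)
qed

lemma prod_fact_le_fact_sum:
  "finite A \<Longrightarrow> (\<Prod>i\<in>A. fact (f i)) \<le> (fact (\<Sum>i\<in>A. f i) :: nat)"
proof (induction A rule: finite_induct)
  case (insert x A)
  then have "(\<Prod>i\<in>insert x A. fact (f i)) \<le> fact (f x) * (fact (sum f A) :: nat)"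
    using mult_le_mono2[OF insert.IH] by simp
  also have "\<dots> \<le> fact (sum f (insert x A))"
    using insert fact_mult_fact_le_fact_add by simp
  finally show ?case .
qed simp

lemma multinomial_coeff_ge_1: "multinomial_coeff \<alpha> \<ge> 1"
proof -
  have "(\<Prod>i\<in>UNIV. fact (\<alpha> i)) \<le> (fact (mi_abs \<alpha>) :: nat)"
    unfolding mi_abs_def by (rule prod_fact_le_fact_sum) simp
  then have "(\<Prod>i\<in>UNIV. fact (\<alpha> i)) \<le> (fact (mi_abs \<alpha>) :: real)"
    by (metis (mono_tags, lifting) of_nat_fact of_nat_le_iff of_nat_prod prod.cong)
  moreover have "(0::real) < (\<Prod>i\<in>UNIV. fact (\<alpha> i))" by (simp add: prod_pos)
  ultimately show ?thesis unfolding multinomial_coeff_def by simp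
qed

lemma multi_indices_component_le: "\<gamma> \<in> multi_indices d \<Longrightarrow> \<gamma> i \<le> d"
  unfolding multi_indices_def by (metis finite UNIV_I mem_Collect_eq member_le_sum order_trans zero_le)

lemma finite_multi_indices: "finite (multi_indices d)"
proof (rule finite_subset)
  show "multi_indices d \<subseteq> PiE UNIV (\<lambda>_. {..d})"
    using multi_indices_component_le by (auto simp: PiE_iff)
qed (simp add: finite_PiE)

lemma zero_in_multi_indices: "(\<lambda>_. 0) \<in> multi_indices d"
  by (simp add: multi_indices_def)

lemma sum_roots_unity_power_orthogonal:
  fixes N g a :: nat
  defines "\<omega> \<equiv> cis (2 * pi / N)"
  assumes "g < N" "a < N"
  shows "(\<Sum>m<N. \<omega> ^ (m * g) * cnj \<omega> ^ (m * a)) = (if g = a then of_nat N else 0)"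
proof -
  define q where "q = \<omega> ^ g * cnj \<omega> ^ a"
  have powers: "\<omega> ^ (m * g) * cnj \<omega> ^ (m * a) = q ^ m" for m
    by (simp add: q_def power_mult_distrib flip: power_mult) (simp add: mult.commute)
  have \<omega>_cnj: "\<omega> * cnj \<omega> = 1"
    by (simp add: \<omega>_def cis_cnj cis_mult)
  have \<omega>_pow: "\<omega> ^ k = cis (2 * pi * real k / N)" for k
    by (simp add: \<omega>_def Complex.DeMoivre mult.commute)
  show ?thesis
  proof (cases "g = a")
    case True
    then have "q = 1" by (simp add: q_def \<omega>_cnj flip: power_mult_distrib)
    then show ?thesis unfolding powers using True by simp
  next
    case False
    have "\<omega> ^ N = 1"
      using \<open>g < N\<close> by (simp add: \<omega>_pow)
    moreover have "q ^ N = (\<omega> ^ N) ^ g * cnj (\<omega> ^ N) ^ a"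
      by (simp add: q_def power_mult_distrib flip: power_mult) (simp add: mult.commute)
    ultimately have "q ^ N = 1" by simp
    have "\<omega> ^ g \<noteq> \<omega> ^ a"
    proof
      assume "\<omega> ^ g = \<omega> ^ a"
      moreover have "inj_on (\<lambda>k. cis (2 * pi * real k / N)) {..<N}"
        using \<open>g < N\<close> by (intro bij_betw_imp_inj_on[OF Complex.bij_betw_roots_unity]) simp
      ultimately show False
        using assms(2,3) False unfolding \<omega>_pow by (auto dest: inj_onD)
    qed
    then have "q \<noteq> 1"
      by (metis q_def \<omega>_cnj mult.assoc mult.right_neutral power_mult_distrib mult.commute)
    then show ?thesis using False \<open>q ^ N = 1\<close> by (simp add: powers geometric_sum)
  qed
qed

definition mpoly_eval_complex ::
    "nat \<Rightarrow> (('n::finite \<Rightarrow> nat) \<Rightarrow> real) \<Rightarrow> ('n \<Rightarrow> complex) \<Rightarrow> complex" where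
  "mpoly_eval_complex d \<beta> z = (\<Sum>\<gamma>\<in>multi_indices d. of_real (\<beta> \<gamma>) * (\<Prod>i\<in>UNIV. z i ^ \<gamma> i))"

lemma mpoly_eval_complex_of_real:
  "mpoly_eval_complex d \<beta> (\<lambda>i. of_real (x $ i)) = of_real (mpoly_eval d \<beta> x)"
  by (simp add: mpoly_eval_complex_def mpoly_eval_def)

lemma sum_mpoly_eval_complex_roots_unity_grid:
  fixes \<alpha> :: "'n::finite \<Rightarrow> nat" and d :: nat
  defines "\<omega> \<equiv> cis (2 * pi / Suc d)"
  assumes \<alpha>: "\<alpha> \<in> multi_indices d"
  shows "(\<Sum>k\<in>UNIV \<rightarrow>\<^sub>E {..<Suc d}.
            mpoly_eval_complex d \<beta> (\<lambda>i. \<omega> ^ k i) * (\<Prod>i\<in>UNIV. cnj \<omega> ^ (k i * \<alpha> i)))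
         = of_real (\<beta> \<alpha>) * of_nat (Suc d) ^ CARD('n)"
proof -
  let ?K = "UNIV \<rightarrow>\<^sub>E {..<Suc d} :: ('n \<Rightarrow> nat) set"
  have orth: "(\<Prod>i\<in>UNIV. \<Sum>m<Suc d. \<omega> ^ (m * \<gamma> i) * cnj \<omega> ^ (m * \<alpha> i))
      = (if \<gamma> = \<alpha> then of_nat (Suc d) ^ CARD('n) else 0)" if "\<gamma> \<in> multi_indices d" for \<gamma>
  proof -
    have "(\<Sum>m<Suc d. \<omega> ^ (m * \<gamma> i) * cnj \<omega> ^ (m * \<alpha> i))
        = (if \<gamma> i = \<alpha> i then of_nat (Suc d) else 0)" for i
      unfolding \<omega>_def using that \<alpha>
      by (intro sum_roots_unity_power_orthogonal) (simp_all add: le_imp_less_Suc multi_indices_component_le)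
    then show ?thesis
      by (cases "\<gamma> = \<alpha>") (auto simp: fun_eq_iff intro!: prod_zero)
  qed
  have "(\<Sum>k\<in>?K. mpoly_eval_complex d \<beta> (\<lambda>i. \<omega> ^ k i) * (\<Prod>i\<in>UNIV. cnj \<omega> ^ (k i * \<alpha> i)))
      = (\<Sum>\<gamma>\<in>multi_indices d. of_real (\<beta> \<gamma>) *
           (\<Sum>k\<in>?K. \<Prod>i\<in>UNIV. \<omega> ^ (k i * \<gamma> i) * cnj \<omega> ^ (k i * \<alpha> i)))"
    by (simp add: mpoly_eval_complex_def sum_distrib_left sum_distrib_right prod.distrib
                  power_mult mult.assoc sum.swap[of _ ?K])
  also have "\<dots> = (\<Sum>\<gamma>\<in>multi_indices d. of_real (\<beta> \<gamma>) *
           (\<Prod>i\<in>UNIV. \<Sum>m<Suc d. \<omega> ^ (m * \<gamma> i) * cnj \<omega> ^ (m * \<alpha> i)))"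
    by (subst prod_sum_PiE) auto
  also have "\<dots> = (\<Sum>\<gamma>\<in>multi_indices d.
                      if \<gamma> = \<alpha> then of_real (\<beta> \<gamma>) * of_nat (Suc d) ^ CARD('n) else 0)"
    by (intro sum.cong refl) (simp only: orth, simp)
  also have "\<dots> = of_real (\<beta> \<alpha>) * of_nat (Suc d) ^ CARD('n)"
    using \<alpha> by (simp add: finite_multi_indices)
  finally show ?thesis .
qed

lemma abs_mpoly_eval_le_sum_abs_coeffs:
  fixes x :: "real^'n::finite"
  assumes "x \<in> unit_cube"
  shows "\<bar>mpoly_eval d \<beta> x\<bar> \<le> (\<Sum>\<gamma>\<in>multi_indices d. \<bar>\<beta> \<gamma>\<bar>)"
  unfolding mpoly_eval_def
proof (rule order_trans[OF sum_abs sum_mono])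
  fix \<gamma> :: "'n \<Rightarrow> nat"
  have "\<bar>\<Prod>i\<in>UNIV. x $ i ^ \<gamma> i\<bar> \<le> 1"
    using assms unfolding abs_prod power_abs unit_cube_def
    by (intro prod_le_1) (auto intro!: power_le_one simp: abs_le_iff)
  then show "\<bar>\<beta> \<gamma> * (\<Prod>i\<in>UNIV. x $ i ^ \<gamma> i)\<bar> \<le> \<bar>\<beta> \<gamma>\<bar>"
    by (simp add: abs_mult mult_left_le)
qed

lemma abs_mpoly_eval_le_cube_sup_norm:
  "x \<in> unit_cube \<Longrightarrow> \<bar>mpoly_eval d \<beta> x\<bar> \<le> cube_sup_norm d \<beta>"
  unfolding cube_sup_norm_def
  by (rule cSUP_upper) (auto intro: bdd_aboveI2 abs_mpoly_eval_le_sum_abs_coeffs)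

lemma cube_sup_norm_nonneg: "0 \<le> cube_sup_norm d \<beta>"
  using abs_mpoly_eval_le_cube_sup_norm[of 0 d \<beta>] unfolding unit_cube_def by simp

definition mpoly_homogenize ::
    "nat \<Rightarrow> (('n::finite \<Rightarrow> nat) \<Rightarrow> real) \<Rightarrow> ('n \<Rightarrow> complex) \<Rightarrow> complex \<Rightarrow> complex" where
  "mpoly_homogenize d \<beta> u w =
     (\<Sum>\<gamma>\<in>multi_indices d. of_real (\<beta> \<gamma>) * (w ^ (d - mi_abs \<gamma>) * (\<Prod>i\<in>UNIV. u i ^ \<gamma> i)))"

lemma mpoly_homogenize_scaled:
  "mpoly_homogenize d \<beta> (\<lambda>i. w * z i) w = w ^ d * mpoly_eval_complex d \<beta> z"
proof -
  have "w ^ (d - mi_abs \<gamma>) * (\<Prod>i\<in>UNIV. (w * z i) ^ \<gamma> i) = w ^ d * (\<Prod>i\<in>UNIV. z i ^ \<gamma> i)"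
    if "\<gamma> \<in> multi_indices d" for \<gamma>
  proof -
    have "(\<Prod>i\<in>UNIV. (w * z i) ^ \<gamma> i) = w ^ mi_abs \<gamma> * (\<Prod>i\<in>UNIV. z i ^ \<gamma> i)"
      by (simp add: power_mult_distrib prod.distrib mi_abs_def power_sum)
    moreover have "mi_abs \<gamma> \<le> d" using that by (simp add: multi_indices_def mi_abs_def)
    ultimately show ?thesis
      by (simp add: mult.assoc flip: power_add)
  qed
  then show ?thesis
    unfolding mpoly_homogenize_def mpoly_eval_complex_def sum_distrib_left
    by (intro sum.cong refl) (simp add: mult.left_commute)
qed

lemma joukowski_on_unit_circle:
  fixes w \<eta> :: complex
  assumes "norm w = 1"
  shows "(w\<^sup>2 * \<eta> + cnj \<eta>) / 2 = w * of_real (Re (w * \<eta>))"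
proof -
  have Re_eq: "of_real (Re u) = (u + cnj u) / 2" for u :: complex
    by (simp add: complex_eq_iff)
  have "w * of_real (Re (w * \<eta>)) = w * ((w * \<eta> + cnj (w * \<eta>)) / 2)"
    by (simp only: Re_eq)
  also have "\<dots> = (w\<^sup>2 * \<eta> + (w * cnj w) * cnj \<eta>) / 2"
    by (simp add: algebra_simps power2_eq_square)
  also have "w * cnj w = 1"
    using assms by (simp add: complex_norm_square[symmetric])
  finally show ?thesis by simp
qed

lemma joukowski_preimage:
  fixes z :: complex
  defines "\<eta> \<equiv> Complex (3/5 * Re z) (- 3/4 * Im z)"
  shows "((1/3)\<^sup>2 * \<eta> + cnj \<eta>) / 2 = (1/3) * z" and "norm \<eta> \<le> norm z"
proof -
  show "((1/3)\<^sup>2 * \<eta> + cnj \<eta>) / 2 = (1/3) * z"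
    by (simp add: \<eta>_def complex_eq_iff power2_eq_square)
  have "(3/5 * Re z)\<^sup>2 + (- 3/4 * Im z)\<^sup>2 = 9/25 * (Re z)\<^sup>2 + 9/16 * (Im z)\<^sup>2"
    by (simp add: power2_eq_square)
  also have "\<dots> \<le> (Re z)\<^sup>2 + (Im z)\<^sup>2"
    using zero_le_power2[of "Re z"] zero_le_power2[of "Im z"] by linarith
  finally have "(3/5 * Re z)\<^sup>2 + (- 3/4 * Im z)\<^sup>2 \<le> (Re z)\<^sup>2 + (Im z)\<^sup>2" .
  then show "norm \<eta> \<le> norm z"
    unfolding \<eta>_def cmod_def by (simp add: real_sqrt_le_mono)
qed

lemma norm_mpoly_eval_complex_le_on_polydisc:
  fixes z :: "'n::finite \<Rightarrow> complex"
  assumes z: "\<And>i. norm (z i) \<le> 1"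
  shows "norm (mpoly_eval_complex d \<beta> z) \<le> 3 ^ d * cube_sup_norm d \<beta>"
proof -
  define \<eta> where "\<eta> i = Complex (3/5 * Re (z i)) (- 3/4 * Im (z i))" for i
  define G where "G w = mpoly_homogenize d \<beta> (\<lambda>i. (w\<^sup>2 * \<eta> i + cnj (\<eta> i)) / 2) w" for w
  have on_circle: "norm (G w) \<le> cube_sup_norm d \<beta>" if "w \<in> frontier (cball 0 1)" for w
  proof -
    from that have w: "norm w = 1" by simp
    define x :: "real^'n" where "x = (\<chi> i. Re (w * \<eta> i))"
    have "\<bar>x $ i\<bar> \<le> 1" for i
    proof -
      have "\<bar>x $ i\<bar> \<le> norm (w * \<eta> i)"
        unfolding x_def vec_lambda_beta by (rule abs_Re_le_cmod)
      also have "\<dots> \<le> norm (z i)"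
        unfolding norm_mult w \<eta>_def using joukowski_preimage(2) by simp
      finally show ?thesis using z[of i] by linarith
    qed
    then have "x \<in> unit_cube" by (simp add: unit_cube_def abs_le_iff)
    have "G w = mpoly_homogenize d \<beta> (\<lambda>i. w * of_real (x $ i)) w"
      unfolding G_def x_def vec_lambda_beta joukowski_on_unit_circle[OF w] ..
    also have "\<dots> = w ^ d * of_real (mpoly_eval d \<beta> x)"
      by (simp only: mpoly_homogenize_scaled mpoly_eval_complex_of_real)
    finally show ?thesis
      using abs_mpoly_eval_le_cube_sup_norm[OF \<open>x \<in> unit_cube\<close>] w by (simp add: norm_mult norm_power)
  qed
  have entire: "G holomorphic_on UNIV"
    unfolding G_def mpoly_homogenize_def by (intro holomorphic_intros) simp
  have "norm (G (1/3)) \<le> cube_sup_norm d \<beta>"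
  proof (rule maximum_modulus_frontier[where f = G and S = "cball 0 1"])
    show "G holomorphic_on interior (cball 0 1)"
      using entire by (rule holomorphic_on_subset) simp
    show "continuous_on (closure (cball 0 1)) G"
      using holomorphic_on_imp_continuous_on[OF entire] by (rule continuous_on_subset) simp
  qed (simp_all add: on_circle)
  moreover have "G (1/3) = (1/3) ^ d * mpoly_eval_complex d \<beta> z"
    unfolding G_def \<eta>_def joukowski_preimage(1) by (rule mpoly_homogenize_scaled)
  ultimately have "norm (mpoly_eval_complex d \<beta> z) / 3 ^ d \<le> cube_sup_norm d \<beta>"
    by (simp add: norm_divide norm_power power_one_over)
  then show ?thesis
    by (simp add: divide_le_eq mult.commute)
qed

lemma abs_coeff_le_cube_sup_norm:
  fixes \<alpha> :: "'n::finite \<Rightarrow> nat"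
  assumes \<alpha>: "\<alpha> \<in> multi_indices d"
  shows "\<bar>\<beta> \<alpha>\<bar> \<le> 3 ^ d * cube_sup_norm d \<beta>"
proof -
  define \<omega> where "\<omega> = cis (2 * pi / Suc d)"
  let ?K = "UNIV \<rightarrow>\<^sub>E {..<Suc d} :: ('n \<Rightarrow> nat) set"
  have "norm \<omega> = 1" by (simp add: \<omega>_def)
  have "\<bar>\<beta> \<alpha>\<bar> * real (Suc d) ^ CARD('n)
      = norm (\<Sum>k\<in>?K. mpoly_eval_complex d \<beta> (\<lambda>i. \<omega> ^ k i) * (\<Prod>i\<in>UNIV. cnj \<omega> ^ (k i * \<alpha> i)))"
    unfolding \<omega>_def sum_mpoly_eval_complex_roots_unity_grid[OF \<alpha>]
    by (simp add: norm_mult norm_power del: of_nat_Suc)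
  also have "\<dots> \<le> (\<Sum>k\<in>?K. 3 ^ d * cube_sup_norm d \<beta>)"
    using \<open>norm \<omega> = 1\<close>
    by (intro order_trans[OF norm_sum sum_mono])
       (simp add: norm_mult norm_power prod_norm[symmetric] norm_mpoly_eval_complex_le_on_polydisc)
  also have "\<dots> = real (Suc d) ^ CARD('n) * (3 ^ d * cube_sup_norm d \<beta>)"
    by (simp add: card_PiE)
  finally show ?thesis by (simp add: mult.commute)
qed

theorem lemma1:
  fixes d :: nat and \<beta> :: "('n::finite \<Rightarrow> nat) \<Rightarrow> real"
  shows "coeff_norm d \<beta> \<le> 3 ^ (d + 1) * cube_sup_norm d \<beta>"
  unfolding coeff_norm_def
proof (rule Max.boundedI)
  show "finite ((\<lambda>\<alpha>. \<bar>\<beta> \<alpha>\<bar> / multinomial_coeff \<alpha>) ` multi_indices d)"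
    by (simp add: finite_multi_indices)
  show "(\<lambda>\<alpha>. \<bar>\<beta> \<alpha>\<bar> / multinomial_coeff \<alpha>) ` multi_indices d \<noteq> {}"
    using zero_in_multi_indices by blast
next
  fix r assume "r \<in> (\<lambda>\<alpha>. \<bar>\<beta> \<alpha>\<bar> / multinomial_coeff \<alpha>) ` multi_indices d"
  then obtain \<alpha> where \<alpha>: "\<alpha> \<in> multi_indices d" and r: "r = \<bar>\<beta> \<alpha>\<bar> / multinomial_coeff \<alpha>"
    by blast
  have "r \<le> \<bar>\<beta> \<alpha>\<bar>"
    unfolding r using multinomial_coeff_ge_1[of \<alpha>] by (simp add: divide_le_eq mult_le_cancel_left1)
  also have "\<dots> \<le> 3 ^ d * cube_sup_norm d \<beta>"
    using \<alpha> by (rule abs_coeff_le_cube_sup_norm)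
  also have "\<dots> \<le> 3 ^ (d + 1) * cube_sup_norm d \<beta>"
    using cube_sup_norm_nonneg by (intro mult_right_mono) simp_all
  finally show "r \<le> 3 ^ (d + 1) * cube_sup_norm d \<beta>" .
qed

end
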